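(* Let $p_0,p_1,p_2,T>0$, $q_k=p_k^{-1/2}$, $\Omega>0$, and let $$C=\tfrac1{16q_0^2}\Big[\big(1+\tfrac{q_0}{q_1}\big)^2\big(1+\tfrac{q_1}{q_2}\big)^2+\big(1-\tfrac{q_0}{q_1}\big)^2\big(1-\tfrac{q_1}{q_2}\big)^2\Big],\quad K=\tfrac1{8q_0^2}\big(1-\tfrac{q_0^2}{q_1^2}\big)\big(1-\tfrac{q_1^2}{q_2^2}\big),\quad \zeta=2q_1T,$$ $R=K/C$ and $J(s)=\frac1{2\pi}\int_0^{\Omega^{1/2}}\frac{e^{isu}}{C+K\cos\zeta u}\,du$ for $s\in\mathbb{R}$. Then for $s\in\mathbb{R}$, $$J(s)=\frac{\Omega^{1/2}}{2C\pi}\sum_{m=0}^\infty\sum_{l=0}^m\Big(-\frac R2\Big)^m\binom ml e^{i\frac{\Omega^{1/2}}2(s+(m-2l)\zeta)}\operatorname{sinc}\Big(\tfrac{\Omega^{1/2}}2(s+(m-2l)\zeta)\Big).$$ Moreover, if $J_M$ denotes the partial sum of this series over $0\le m\le M$, then $$\sup_{s\in\mathbb{R}}|J(s)-J_M(s)|\le\frac{\Omega^{1/2}}{2C\pi}\frac{|R|^{M+1}}{1-|R|}.$$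
   Context: $\operatorname{sinc}x=\frac{\sin x}{x}$ (with $\operatorname{sinc}0=1$). (These quantities are such that $|R|<1$.) *)

theory Defs
  imports "HOL-Analysis.Analysis"
begin

definition sinc :: "real \<Rightarrow> real" where
  "sinc x = (if x = 0 then 1 else sin x / x)"

end

theory Submission
  imports Defs
begin

text \<open>
  Write a = q0/q1, b = q1/q2, X = (1+a)(1+b) and Y = (1-a)(1-b). Then 16 q0^2 C = X^2 + Y^2 and
  16 q0^2 K = 2XY, while X - Y and X + Y are both positive; so |X| \<noteq> |Y|, hence |K| < C and
  |R| < 1. Thus 1/(C + K cos(\<zeta>u)) is the sum of the geometric series (1/C) \<Sum> (-R cos(\<zeta>u))^m,
  whose M-th partial sum is uniformly within |R|^(M+1) / (C (1 - |R|)) of it. Expanding cos^m by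
  the binomial theorem into exponentials e^(i(m-2l)\<zeta>u), each term of the partial sum integrates
  over [0, A] to A e^(iAw/2) sinc(Aw/2). Integrating the uniform bound over an interval of length
  A = sqrt \<Omega> gives the error estimate, which tends to 0 and therefore also yields convergence.
\<close>

definition exp_sinc :: "real \<Rightarrow> complex" where
  "exp_sinc x = exp (\<i> * of_real x) * of_real (sinc x)"

lemma exp_sinc_eq: "2 * \<i> * of_real x * exp_sinc x = exp (2 * \<i> * of_real x) - 1"
proof (cases "x = 0")
  case False
  have "2 * \<i> * of_real x * exp_sinc x = 2 * \<i> * exp (\<i> * of_real x) * sin (of_real x)"
    using False by (simp add: exp_sinc_def sinc_def sin_of_real)
  also have "\<dots> = exp (\<i> * of_real x) * (exp (\<i> * of_real x) - exp (- (\<i> * of_real x)))"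
    by (simp add: sin_exp_eq field_simps)
  also have "\<dots> = exp (2 * \<i> * of_real x) - 1"
    by (simp add: exp_add[symmetric] exp_minus_inverse algebra_simps)
  finally show ?thesis .
qed (simp add: exp_sinc_def)

lemma has_integral_exp_i:
  fixes w A :: real
  assumes "A \<ge> 0"
  shows "((\<lambda>u. exp (\<i> * of_real (w * u))) has_integral of_real A * exp_sinc (A / 2 * w)) {0..A}"
proof (cases "w = 0")
  case True
  then show ?thesis
    using has_integral_const_real[of "1::complex" 0 A] assms
    by (simp add: scaleR_conv_of_real exp_sinc_def sinc_def)
next
  case False
  have "((\<lambda>u. exp (\<i> * of_real (w * u)) / (\<i> * of_real w)) has_vector_derivative
          exp (\<i> * of_real (w * u))) (at u within {0..A})" for u
  proof -
    have "((\<lambda>z. exp (\<i> * (of_real w * z)) / (\<i> * of_real w)) has_field_derivative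
          exp (\<i> * (of_real w * of_real u))) (at (of_real u))"
      using False by (auto intro!: derivative_eq_intros simp: field_simps)
    from has_vector_derivative_real_field[OF this] show ?thesis
      by (simp add: has_vector_derivative_at_within)
  qed
  then have "((\<lambda>u. exp (\<i> * of_real (w * u))) has_integral
      exp (\<i> * of_real (w * A)) / (\<i> * of_real w) - 1 / (\<i> * of_real w)) {0..A}"
    using fundamental_theorem_of_calculus[OF assms, of "\<lambda>u. exp (\<i> * of_real (w * u)) / (\<i> * of_real w)"]
    by simp
  moreover have "exp (\<i> * of_real (w * A)) / (\<i> * of_real w) - 1 / (\<i> * of_real w)
      = of_real A * exp_sinc (A / 2 * w)"
    using exp_sinc_eq[of "A / 2 * w"] False
    by (simp add: field_simps)
  ultimately show ?thesis by simp
qed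

lemma of_real_cos_power_eq_sum_exp:
  "of_real (cos x ^ m) =
     (\<Sum>l\<le>m. of_real (real (m choose l) / 2 ^ m) * exp (\<i> * of_real ((real m - 2 * real l) * x)))"
proof -
  have "of_real (cos x) = (exp (- (\<i> * x)) + exp (\<i> * x)) / 2"
    by (simp add: cos_of_real[symmetric] cos_exp_eq del: cos_of_real)
  then have "of_real (cos x ^ m) = (exp (- (\<i> * x)) + exp (\<i> * x)) ^ m / 2 ^ m"
    by (metis of_real_power power_divide)
  also have "\<dots> = (\<Sum>l\<le>m. of_nat (m choose l) * exp (- (\<i> * x)) ^ l * exp (\<i> * x) ^ (m - l)) / 2 ^ m"
    by (simp add: binomial_ring)
  also have "\<dots> = (\<Sum>l\<le>m. of_real (real (m choose l) / 2 ^ m) * exp (\<i> * of_real ((real m - 2 * real l) * x)))"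
    unfolding sum_divide_distrib
  proof (intro sum.cong refl)
    fix l assume "l \<in> {..m}"
    then have "of_nat l * (- (\<i> * x)) + of_nat (m - l) * (\<i> * x) = \<i> * of_real ((real m - 2 * real l) * x)"
      by (simp add: of_nat_diff algebra_simps)
    then have "exp (- (\<i> * x)) ^ l * exp (\<i> * x) ^ (m - l) = exp (\<i> * of_real ((real m - 2 * real l) * x))"
      by (metis exp_add exp_of_nat_mult)
    then show "of_nat (m choose l) * exp (- (\<i> * x)) ^ l * exp (\<i> * x) ^ (m - l) / 2 ^ m =
        of_real (real (m choose l) / 2 ^ m) * exp (\<i> * of_real ((real m - 2 * real l) * x))"
      by simp
  qed
  finally show ?thesis .
qed

lemma has_integral_cos_power_mult_exp_i:
  fixes \<zeta> s A :: real
  assumes "A \<ge> 0"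
  shows "((\<lambda>u. of_real (cos (\<zeta> * u) ^ m) * exp (\<i> * of_real (s * u))) has_integral
           of_real A * (\<Sum>l\<le>m. of_real (real (m choose l) / 2 ^ m) *
             exp_sinc (A / 2 * (s + (real m - 2 * real l) * \<zeta>)))) {0..A}"
proof -
  have "of_real (cos (\<zeta> * u) ^ m) * exp (\<i> * of_real (s * u)) =
      (\<Sum>l\<le>m. of_real (real (m choose l) / 2 ^ m) *
        exp (\<i> * of_real ((s + (real m - 2 * real l) * \<zeta>) * u)))" for u
    unfolding of_real_cos_power_eq_sum_exp sum_distrib_right
    by (intro sum.cong refl) (simp add: mult.assoc exp_add[symmetric] algebra_simps)
  moreover have "((\<lambda>u. \<Sum>l\<le>m. of_real (real (m choose l) / 2 ^ m) *
        exp (\<i> * of_real ((s + (real m - 2 * real l) * \<zeta>) * u))) has_integral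
      (\<Sum>l\<le>m. of_real (real (m choose l) / 2 ^ m) *
        (of_real A * exp_sinc (A / 2 * (s + (real m - 2 * real l) * \<zeta>))))) {0..A}"
    by (intro has_integral_sum finite_atMost has_integral_mult_right has_integral_exp_i assms)
  ultimately show ?thesis
    by (simp add: sum_distrib_left mult.left_commute)
qed

lemma abs_inverse_one_plus_minus_geometric_le:
  fixes x r :: real
  assumes "\<bar>x\<bar> \<le> r" and "r < 1"
  shows "\<bar>1 / (1 + x) - (\<Sum>m\<le>M. (- x) ^ m)\<bar> \<le> r ^ (M + 1) / (1 - r)"
proof -
  have "1 + x > 0" using assms by linarith
  have "(\<Sum>m\<le>M. (- x) ^ m) = (1 - (- x) ^ (M + 1)) / (1 + x)"
    using sum_gp_strict[of "- x" "M + 1"] \<open>1 + x > 0\<close> by (simp add: lessThan_Suc_atMost)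
  then have "1 / (1 + x) - (\<Sum>m\<le>M. (- x) ^ m) = (- x) ^ (M + 1) / (1 + x)"
    by (simp only: diff_divide_distrib[symmetric]) simp
  then have "\<bar>1 / (1 + x) - (\<Sum>m\<le>M. (- x) ^ m)\<bar> = \<bar>x\<bar> ^ (M + 1) / (1 + x)"
    using \<open>1 + x > 0\<close> by (simp add: abs_divide abs_mult power_abs)
  also have "\<dots> \<le> r ^ (M + 1) / (1 - r)"
    using assms \<open>1 + x > 0\<close> by (intro frac_le power_mono) auto
  finally show ?thesis .
qed

lemma abs_two_mult_less_sum_squares:
  fixes X Y :: real
  assumes "\<bar>X\<bar> \<noteq> \<bar>Y\<bar>"
  shows "\<bar>2 * X * Y\<bar> < X\<^sup>2 + Y\<^sup>2"
proof -
  have "0 < (\<bar>X\<bar> - \<bar>Y\<bar>)\<^sup>2" using assms by simp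
  then show ?thesis by (simp add: abs_mult power2_eq_square algebra_simps)
qed

lemma abs_cos_coefficient_less_constant_term:
  fixes q0 q1 q2 :: real
  assumes "q0 > 0" and "q1 > 0" and "q2 > 0"
  shows "\<bar>1 / (8 * q0\<^sup>2) * (1 - q0\<^sup>2/q1\<^sup>2) * (1 - q1\<^sup>2/q2\<^sup>2)\<bar>
    < 1 / (16 * q0\<^sup>2) * ((1 + q0/q1)\<^sup>2 * (1 + q1/q2)\<^sup>2 + (1 - q0/q1)\<^sup>2 * (1 - q1/q2)\<^sup>2)"
proof -
  define a b where "a = q0 / q1" and "b = q1 / q2"
  have "a > 0" "b > 0" using assms by (simp_all add: a_def b_def)
  define X Y where "X = (1 + a) * (1 + b)" and "Y = (1 - a) * (1 - b)"
  have "X - Y = 2 * a + 2 * b" "X + Y = 2 + 2 * (a * b)"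
    by (simp_all add: X_def Y_def algebra_simps)
  moreover have "a * b > 0"
    using \<open>a > 0\<close> \<open>b > 0\<close> by simp
  ultimately have "\<bar>Y\<bar> < X"
    unfolding abs_less_iff using \<open>a > 0\<close> \<open>b > 0\<close> by (intro conjI) linarith+
  then have "\<bar>X\<bar> \<noteq> \<bar>Y\<bar>"
    by simp
  then have less: "\<bar>2 * X * Y\<bar> / (16 * q0\<^sup>2) < (X\<^sup>2 + Y\<^sup>2) / (16 * q0\<^sup>2)"
    using assms by (intro divide_strict_right_mono abs_two_mult_less_sum_squares) auto
  have lhs_eq:
    "1 / (8 * q0\<^sup>2) * (1 - q0\<^sup>2/q1\<^sup>2) * (1 - q1\<^sup>2/q2\<^sup>2) = 2 * X * Y / (16 * q0\<^sup>2)"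
    unfolding power_divide[symmetric] a_def[symmetric] b_def[symmetric] X_def Y_def
    using \<open>q0 > 0\<close> by (simp add: field_simps power2_eq_square)
  have rhs_eq:
    "(1 + q0/q1)\<^sup>2 * (1 + q1/q2)\<^sup>2 + (1 - q0/q1)\<^sup>2 * (1 - q1/q2)\<^sup>2 = X\<^sup>2 + Y\<^sup>2"
    by (simp add: X_def Y_def a_def b_def power_mult_distrib)
  show ?thesis
    unfolding lhs_eq rhs_eq using less by simp
qed

lemma norm_exp_i_div_cos_minus_geometric_sum_le:
  fixes C K y t :: real
  assumes "\<bar>K\<bar> < C"
  defines "R \<equiv> K / C"
  shows "norm (exp (\<i> * of_real t) / of_real (C + K * cos y)
            - (\<Sum>m\<le>M. of_real ((- R) ^ m / C) * (of_real (cos y ^ m) * exp (\<i> * of_real t))))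
         \<le> \<bar>R\<bar> ^ (M + 1) / (1 - \<bar>R\<bar>) / C"
    (is "norm ?D \<le> _")
proof -
  have "C > 0" using assms(1) by linarith
  have "\<bar>R\<bar> < 1" using assms(1) \<open>C > 0\<close> by (simp add: R_def abs_divide)
  have "\<bar>R * cos y\<bar> \<le> \<bar>R\<bar>"
    by (simp add: abs_mult mult_left_le)
  have denom: "C + K * cos y = C * (1 + R * cos y)"
    using \<open>C > 0\<close> by (simp add: R_def algebra_simps)
  have "(\<Sum>m\<le>M. (- R) ^ m * cos y ^ m) = (\<Sum>m\<le>M. (- (R * cos y)) ^ m)"
    by (simp flip: power_mult_distrib)
  moreover have "?D = of_real ((1 / (1 + R * cos y) - (\<Sum>m\<le>M. (- R) ^ m * cos y ^ m)) / C) *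
      exp (\<i> * of_real t)"
    unfolding denom of_real_mult divide_inverse inverse_mult_distrib
    by (simp add: sum_distrib_left sum_distrib_right algebra_simps)
  ultimately have "norm ?D = \<bar>1 / (1 + R * cos y) - (\<Sum>m\<le>M. (- (R * cos y)) ^ m)\<bar> / C"
    using \<open>C > 0\<close>
    by (simp only: norm_mult norm_of_real norm_exp_i_times mult_1_right abs_divide abs_of_pos)
  also have "\<dots> \<le> \<bar>R\<bar> ^ (M + 1) / (1 - \<bar>R\<bar>) / C"
    using \<open>C > 0\<close> \<open>\<bar>R * cos y\<bar> \<le> \<bar>R\<bar>\<close> \<open>\<bar>R\<bar> < 1\<close>
    by (intro divide_right_mono abs_inverse_one_plus_minus_geometric_le) auto
  finally show ?thesis .
qed

lemma norm_integral_exp_i_div_cos_minus_partial_sum_le: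
  fixes C K \<zeta> s A :: real
  assumes "\<bar>K\<bar> < C" and "A \<ge> 0"
  defines "R \<equiv> K / C"
  shows "norm (integral {0..A} (\<lambda>u. exp (\<i> * of_real (s * u)) / of_real (C + K * cos (\<zeta> * u)))
            - of_real (A / C) * (\<Sum>m\<le>M. \<Sum>l\<le>m. of_real ((- R / 2) ^ m * real (m choose l)) *
                exp_sinc (A / 2 * (s + (real m - 2 * real l) * \<zeta>))))
         \<le> A / C * \<bar>R\<bar> ^ (M + 1) / (1 - \<bar>R\<bar>)"
proof -
  have "C > 0" using assms(1) by linarith
  have "\<bar>R\<bar> < 1" using assms(1) \<open>C > 0\<close> by (simp add: R_def abs_divide)
  have K_cos_le: "\<bar>K * cos y\<bar> \<le> \<bar>K\<bar>" for y
    by (simp add: abs_mult mult_left_le)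
  have denom_pos: "C + K * cos y > 0" for y
    using abs_le_D2[OF K_cos_le[of y]] assms(1) by linarith
  define f where "f u = exp (\<i> * of_real (s * u)) / of_real (C + K * cos (\<zeta> * u))" for u
  define g where "g u = (\<Sum>m\<le>M. of_real ((- R) ^ m / C) *
      (of_real (cos (\<zeta> * u) ^ m) * exp (\<i> * of_real (s * u))))" for u
  define S where "S = (\<Sum>m\<le>M. \<Sum>l\<le>m. of_real ((- R / 2) ^ m * real (m choose l)) *
      exp_sinc (A / 2 * (s + (real m - 2 * real l) * \<zeta>)))"
  define B where "B = \<bar>R\<bar> ^ (M + 1) / (1 - \<bar>R\<bar>) / C"
  have "continuous_on {0..A} f"
    unfolding f_def using denom_pos[THEN order_less_imp_not_eq2]
    by (intro continuous_intros) (auto simp del: of_real_add of_real_mult)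
  then have "f integrable_on {0..A}"
    by (rule integrable_continuous_interval)
  moreover have "(g has_integral of_real (A / C) * S) {0..A}"
  proof -
    have "(g has_integral (\<Sum>m\<le>M. of_real ((- R) ^ m / C) *
        (of_real A * (\<Sum>l\<le>m. of_real (real (m choose l) / 2 ^ m) *
          exp_sinc (A / 2 * (s + (real m - 2 * real l) * \<zeta>)))))) {0..A}"
      unfolding g_def
      by (intro has_integral_sum finite_atMost has_integral_mult_right
          has_integral_cos_power_mult_exp_i assms)
    then show ?thesis
      unfolding S_def power_divide by (simp add: sum_distrib_left mult_ac)
  qed
  ultimately have "((\<lambda>u. f u - g u) has_integral integral {0..A} f - of_real (A / C) * S) {0..A}"
    by (intro has_integral_diff integrable_integral)
  moreover have "norm (f u - g u) \<le> B" for u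
    unfolding f_def g_def B_def R_def by (rule norm_exp_i_div_cos_minus_geometric_sum_le[OF assms(1)])
  moreover have "B \<ge> 0"
    using \<open>C > 0\<close> \<open>\<bar>R\<bar> < 1\<close> by (simp add: B_def)
  ultimately have "norm (integral {0..A} f - of_real (A / C) * S) \<le> B * A"
    using has_integral_bound_real[of B "{}" "\<lambda>u. f u - g u" _ 0 A] assms(2) by simp
  then show ?thesis
    by (simp add: f_def[abs_def] S_def B_def mult_ac)
qed

lemma sums_if_norm_remainder_le:
  fixes f :: "nat \<Rightarrow> 'a::real_normed_vector"
  assumes "\<And>M. norm (L - (\<Sum>m\<le>M. f m)) \<le> e M" and "e \<longlonglongrightarrow> 0"
  shows "f sums L"
proof -
  have "norm ((\<Sum>m\<le>M. f m) - L) \<le> e M" for M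
    using assms(1)[of M] by (metis norm_minus_commute)
  then have "(\<lambda>M. (\<Sum>m\<le>M. f m) - L) \<longlonglongrightarrow> 0"
    by (intro Lim_null_comparison[OF always_eventually assms(2)] allI)
  then show ?thesis
    unfolding sums_def_le by (rule LIM_zero_cancel)
qed

theorem theorem4p2:
  fixes p0 p1 p2 T \<Omega> :: real
  assumes "p0 > 0" and "p1 > 0" and "p2 > 0" and "T > 0" and "\<Omega> > 0"
  defines "q0 \<equiv> p0 powr (-1/2)"
      and "q1 \<equiv> p1 powr (-1/2)"
      and "q2 \<equiv> p2 powr (-1/2)"
  defines "C \<equiv> 1 / (16 * q0\<^sup>2) *
              ((1 + q0/q1)\<^sup>2 * (1 + q1/q2)\<^sup>2 + (1 - q0/q1)\<^sup>2 * (1 - q1/q2)\<^sup>2)"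
      and "K \<equiv> 1 / (8 * q0\<^sup>2) * (1 - q0\<^sup>2/q1\<^sup>2) * (1 - q1\<^sup>2/q2\<^sup>2)"
      and "\<zeta> \<equiv> 2 * q1 * T"
  defines "R \<equiv> K / C"
  defines "J \<equiv> (\<lambda>s::real. complex_of_real (1 / (2 * pi)) *
              integral {0..sqrt \<Omega>}
                (\<lambda>u. exp (\<i> * complex_of_real (s * u)) / complex_of_real (C + K * cos (\<zeta> * u))))"
  defines "t \<equiv> (\<lambda>(s::real) (m::nat) (l::nat).
              complex_of_real ((- R / 2) ^ m * real (m choose l)) *
              exp (\<i> * complex_of_real (sqrt \<Omega> / 2 * (s + (real m - 2 * real l) * \<zeta>))) *
              complex_of_real (sinc (sqrt \<Omega> / 2 * (s + (real m - 2 * real l) * \<zeta>))))"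
  defines "JM \<equiv> (\<lambda>(M::nat) (s::real). complex_of_real (sqrt \<Omega> / (2 * C * pi)) *
              (\<Sum>m\<le>M. \<Sum>l\<le>m. t s m l))"
  shows "(\<forall>s::real. (\<lambda>m. complex_of_real (sqrt \<Omega> / (2 * C * pi)) * (\<Sum>l\<le>m. t s m l)) sums J s)
       \<and> (\<forall>M::nat. \<forall>s::real.
            norm (J s - JM M s) \<le> sqrt \<Omega> / (2 * C * pi) * \<bar>R\<bar> ^ (M + 1) / (1 - \<bar>R\<bar>))"
proof -
  have "q0 > 0" "q1 > 0" "q2 > 0"
    using assms(1-3) by (simp_all add: q0_def q1_def q2_def)
  then have "\<bar>K\<bar> < C"
    unfolding K_def C_def by (rule abs_cos_coefficient_less_constant_term)
  then have "C > 0" and "\<bar>R\<bar> < 1"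
    by (auto simp: R_def abs_divide)
  define E where "E M = sqrt \<Omega> / (2 * C * pi) * \<bar>R\<bar> ^ (M + 1) / (1 - \<bar>R\<bar>)" for M
  have t_eq: "t s m l = of_real ((- R / 2) ^ m * real (m choose l)) *
      exp_sinc (sqrt \<Omega> / 2 * (s + (real m - 2 * real l) * \<zeta>))" for s m l
    by (simp add: t_def exp_sinc_def mult.assoc)
  have bound: "norm (J s - JM M s) \<le> E M" for M s
  proof -
    let ?I = "integral {0..sqrt \<Omega>} (\<lambda>u. exp (\<i> * of_real (s * u)) / of_real (C + K * cos (\<zeta> * u)))"
    let ?P = "\<Sum>m\<le>M. \<Sum>l\<le>m. t s m l"
    have err:
      "norm (?I - of_real (sqrt \<Omega> / C) * ?P) \<le> sqrt \<Omega> / C * \<bar>R\<bar> ^ (M + 1) / (1 - \<bar>R\<bar>)"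
      unfolding t_eq using assms(5)
      by (intro norm_integral_exp_i_div_cos_minus_partial_sum_le[OF \<open>\<bar>K\<bar> < C\<close>, folded R_def]) simp
    have "J s - JM M s = of_real (1 / (2 * pi)) * (?I - of_real (sqrt \<Omega> / C) * ?P)"
      by (simp add: J_def JM_def algebra_simps)
    then have "norm (J s - JM M s) = norm (?I - of_real (sqrt \<Omega> / C) * ?P) / (2 * pi)"
      by (simp only: norm_mult norm_of_real) simp
    also have "\<dots> \<le> sqrt \<Omega> / C * \<bar>R\<bar> ^ (M + 1) / (1 - \<bar>R\<bar>) / (2 * pi)"
      using err by (intro divide_right_mono) simp_all
    also have "\<dots> = E M"
      by (simp add: E_def)
    finally show ?thesis .
  qed
  have "E \<longlonglongrightarrow> 0"
    unfolding E_def using LIMSEQ_power_zero[of "\<bar>R\<bar>"] \<open>\<bar>R\<bar> < 1\<close>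
    by (intro tendsto_divide_zero tendsto_mult_right_zero) (simp add: tendsto_mult_right_zero)
  then have "(\<lambda>m. of_real (sqrt \<Omega> / (2 * C * pi)) * (\<Sum>l\<le>m. t s m l)) sums J s" for s
    using bound by (intro sums_if_norm_remainder_le) (simp_all add: JM_def sum_distrib_left)
  with bound show ?thesis
    unfolding E_def by blast
qed

end
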